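(* Let $g,f\in\mathbb{Z}[[x]]$ with $g(0)=1$, $f(0)=0$ and $f'(0)\in\{1,-1\}$, and suppose the Riordan array $(g,f)$ is an involution, i.e. $g(x)g(f(x))=1$ and $f(f(x))=x$. Let $a(x)=\frac{x\,g(x)}{f(x)}$ (a formal power series with invertible constant term). Then the almost Riordan array $(a;g,f)$ is an involution in the group of almost Riordan arrays of first order.
   Context: All matrices are infinite lower-triangular with rows and columns indexed by $n,k\ge0$. $[x^n]h(x)$ denotes the coefficient of $x^n$ in $h$. The Riordan array $(g,f)$ is the matrix with entries $[x^n]g(x)f(x)^k$; it is an involution if $(g,f)^2=(1,x)$, equivalently $g(x)g(f(x))=1$ and $f(f(x))=x$. An almost Riordan array of first order $(a;g,f)$ has associated matrix $M$ with $M_{0,0}=a_0$, $M_{0,k}=0$ for $k\ge1$, $M_{n,0}=a_n$ for $n\ge1$, and $M_{n,k}=[x^{n-1}]\,g(x)f(x)^{k-1}$ for $n,k\ge1$; the product $(a;g,f)\cdot(b;u,v)=\big(b_0a+xg(x)\tilde b(f(x));\ g\,u(f),\ v(f)\big)$, $\tilde b(x)=(b(x)-b_0)/x$, corresponds to the matrix product. It is an involution if $M^2=I$. *)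

theory Defs
  imports "HOL-Computational_Algebra.Formal_Power_Series"
begin

definition almost_riordan_matrix :: "int fps \<Rightarrow> int fps \<Rightarrow> int fps \<Rightarrow> nat \<Rightarrow> nat \<Rightarrow> int" where
  "almost_riordan_matrix a g f n k =
     (if k = 0 then fps_nth a n
      else if n = 0 then 0
      else fps_nth (g * f ^ (k - 1)) (n - 1))"

text \<open>Product of two infinite lower-triangular matrices: (M N)(n,k) = sum over j of M(n,j) N(j,k);
  for lower-triangular M only j <= n contribute.\<close>
definition lt_matrix_mult :: "(nat \<Rightarrow> nat \<Rightarrow> int) \<Rightarrow> (nat \<Rightarrow> nat \<Rightarrow> int) \<Rightarrow> nat \<Rightarrow> nat \<Rightarrow> int" where
  "lt_matrix_mult M N n k = (\<Sum>j\<le>n. M n j * N j k)"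

definition is_involution_matrix :: "(nat \<Rightarrow> nat \<Rightarrow> int) \<Rightarrow> bool" where
  "is_involution_matrix M \<longleftrightarrow>
     (\<forall>n k. lt_matrix_mult M M n k = (if n = k then 1 else 0))"

text \<open>a(x) = x g(x) / f(x): the unique power series a with a * f = x * g
  (unique since int fps is an integral domain and f is nonzero).\<close>
definition xg_div_f :: "int fps \<Rightarrow> int fps \<Rightarrow> int fps" where
  "xg_div_f g f = (THE a. a * f = fps_X * g)"

end

theory Submission
  imports Defs
begin

unbundle fps_syntax

text \<open>
  Reading the columns of a matrix as power series, the almost Riordan array (a; g, f) sends
  h to h(0) a + x g (((h - h(0)) / x) \<circ> f). Its k-th column is a for k = 0 and x g f^(k-1)
  otherwise, so it is an involution iff it sends a to 1 and x g f^k to x^(k+1).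
  The latter is g (g \<circ> f) = 1 together with f \<circ> f = x. For the former, multiply by f:
  composing a f = x g with f gives (a \<circ> f) x = f (g \<circ> f), and the image of a times f
  collapses to g (g \<circ> f) f = f.
\<close>

lemma fps_mult_compose_nth:
  fixes g h f :: "'a::comm_semiring_1 fps"
  assumes f0: "f $ 0 = 0"
  shows "(g * (h oo f)) $ m = (\<Sum>i\<le>m. h $ i * (g * f ^ i) $ m)"
proof -
  have "(g * (h oo f)) $ m = (\<Sum>k\<le>m. g $ k * (\<Sum>i\<le>m - k. h $ i * (f ^ i) $ (m - k)))"
    by (simp add: fps_mult_nth fps_compose_nth atLeast0AtMost)
  also have "\<dots> = (\<Sum>k\<le>m. g $ k * (\<Sum>i\<le>m. h $ i * (f ^ i) $ (m - k)))"
  proof (rule sum.cong[OF refl])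
    fix k assume "k \<in> {..m}"
    have "(\<Sum>i\<le>m - k. h $ i * (f ^ i) $ (m - k)) = (\<Sum>i\<le>m. h $ i * (f ^ i) $ (m - k))"
      by (rule sum.mono_neutral_left) (auto simp: startsby_zero_power_prefix[OF f0])
    then show "g $ k * (\<Sum>i\<le>m - k. h $ i * (f ^ i) $ (m - k))
        = g $ k * (\<Sum>i\<le>m. h $ i * (f ^ i) $ (m - k))"
      by simp
  qed
  also have "\<dots> = (\<Sum>k\<le>m. \<Sum>i\<le>m. h $ i * (g $ k * (f ^ i) $ (m - k)))"
    by (simp add: sum_distrib_left mult.left_commute)
  also have "\<dots> = (\<Sum>i\<le>m. \<Sum>k\<le>m. h $ i * (g $ k * (f ^ i) $ (m - k)))"
    by (rule sum.swap)
  also have "\<dots> = (\<Sum>i\<le>m. h $ i * (\<Sum>k\<le>m. g $ k * (f ^ i) $ (m - k)))"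
    by (simp add: sum_distrib_left)
  also have "\<dots> = (\<Sum>i\<le>m. h $ i * (g * f ^ i) $ m)"
    by (simp add: fps_mult_nth atLeast0AtMost)
  finally show ?thesis .
qed

definition almost_riordan_apply :: "'a::comm_semiring_1 fps \<Rightarrow> 'a fps \<Rightarrow> 'a fps \<Rightarrow> 'a fps \<Rightarrow> 'a fps"
  where "almost_riordan_apply a g f h = fps_const (h $ 0) * a + fps_X * g * (fps_shift 1 h oo f)"

definition almost_riordan_column :: "'a::comm_semiring_1 fps \<Rightarrow> 'a fps \<Rightarrow> 'a fps \<Rightarrow> nat \<Rightarrow> 'a fps"
  where "almost_riordan_column a g f k = (if k = 0 then a else fps_X * g * f ^ (k - 1))"

lemma almost_riordan_matrix_eq_column_nth:
  "almost_riordan_matrix a g f n k = almost_riordan_column a g f k $ n"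
  by (simp add: almost_riordan_matrix_def almost_riordan_column_def mult.assoc)

lemma almost_riordan_matrix_mult_vector:
  assumes f0: "f $ 0 = 0"
  shows "(\<Sum>j\<le>n. almost_riordan_matrix a g f n j * h $ j) = almost_riordan_apply a g f h $ n"
proof (cases n)
  case 0
  then show ?thesis by (simp add: almost_riordan_apply_def almost_riordan_matrix_def)
next
  case (Suc m)
  have "(\<Sum>j\<le>n. almost_riordan_matrix a g f n j * h $ j)
      = a $ n * h $ 0 + (\<Sum>i\<le>m. fps_shift 1 h $ i * (g * f ^ i) $ m)"
    unfolding Suc sum.atMost_Suc_shift by (simp add: almost_riordan_matrix_def mult.commute)
  also have "\<dots> = almost_riordan_apply a g f h $ n"
    by (simp add: almost_riordan_apply_def Suc fps_mult_compose_nth[OF f0] mult.assoc mult.commute)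
  finally show ?thesis .
qed

lemma is_involution_almost_riordan_matrixI:
  assumes f0: "f $ 0 = 0"
    and columns: "\<And>k. almost_riordan_apply a g f (almost_riordan_column a g f k) = fps_X ^ k"
  shows "is_involution_matrix (almost_riordan_matrix a g f)"
  unfolding is_involution_matrix_def lt_matrix_mult_def
proof (intro allI)
  fix n k
  have "(\<Sum>j\<le>n. almost_riordan_matrix a g f n j * almost_riordan_matrix a g f j k)
      = almost_riordan_apply a g f (almost_riordan_column a g f k) $ n"
    unfolding almost_riordan_matrix_eq_column_nth[of a g f _ k]
    by (rule almost_riordan_matrix_mult_vector[OF f0])
  then show "(\<Sum>j\<le>n. almost_riordan_matrix a g f n j * almost_riordan_matrix a g f j k)
      = (if n = k then 1 else 0)"
    by (simp add: columns fps_X_power_nth)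
qed

lemma almost_riordan_apply_shifted_column:
  fixes a g f :: "'a::idom fps"
  assumes f0: "f $ 0 = 0" and g_inv: "g * (g oo f) = 1" and f_inv: "f oo f = fps_X"
  shows "almost_riordan_apply a g f (fps_X * g * f ^ k) = fps_X ^ Suc k"
proof -
  have "fps_shift 1 (fps_X * g * f ^ k) = g * f ^ k"
    using fps_shift_times_fps_X'[of "g * f ^ k"] by (simp only: mult_ac)
  moreover have "(g * f ^ k) oo f = (g oo f) * fps_X ^ k"
    by (simp add: fps_compose_mult_distrib[OF f0] fps_compose_power[OF f0, symmetric] f_inv)
  ultimately have "almost_riordan_apply a g f (fps_X * g * f ^ k) = fps_X * (g * (g oo f)) * fps_X ^ k"
    by (simp add: almost_riordan_apply_def mult.assoc)
  then show ?thesis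
    by (simp add: g_inv)
qed

lemma almost_riordan_apply_self:
  fixes a g f :: "'a::idom fps"
  assumes f0: "f $ 0 = 0" and "f \<noteq> 0" and af: "a * f = fps_X * g"
    and g_inv: "g * (g oo f) = 1" and f_inv: "f oo f = fps_X"
  shows "almost_riordan_apply a g f a = 1"
proof -
  have X_comp_f: "fps_X oo f = f"
    using f0 by simp
  have a_shift: "fps_shift 1 a * fps_X = a - fps_const (a $ 0)"
    by (intro fps_ext) simp
  have shift_comp: "(fps_shift 1 a oo f) * f = (a oo f) - fps_const (a $ 0)"
    using arg_cong[OF a_shift, of "\<lambda>h. h oo f"]
    by (simp add: fps_compose_mult_distrib[OF f0] fps_compose_sub_distrib X_comp_f)
  have a_comp: "(a oo f) * fps_X = f * (g oo f)"
    using arg_cong[OF af, of "\<lambda>h. h oo f"]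
    by (simp add: fps_compose_mult_distrib[OF f0] f_inv X_comp_f mult.commute)
  have "almost_riordan_apply a g f a * f
      = fps_const (a $ 0) * (a * f) + fps_X * g * ((fps_shift 1 a oo f) * f)"
    by (simp add: almost_riordan_apply_def algebra_simps)
  also have "\<dots> = fps_const (a $ 0) * (fps_X * g) + fps_X * g * ((a oo f) - fps_const (a $ 0))"
    by (simp only: af shift_comp)
  also have "\<dots> = g * ((a oo f) * fps_X)"
    by (simp add: algebra_simps)
  also have "\<dots> = 1 * f"
    by (simp add: a_comp g_inv mult.left_commute)
  finally show ?thesis
    using \<open>f \<noteq> 0\<close> by simp
qed

lemma xg_div_f_mult:
  assumes f0: "f $ 0 = 0" and unit: "is_unit (f $ 1)"
  shows "xg_div_f g f * f = fps_X * g"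
proof -
  obtain c where c: "f $ 1 * c = 1"
    using unit by (metis dvdE)
  have f_eq: "f = fps_shift 1 f * fps_X"
    using f0 by (intro fps_ext) (simp add: not0_implies_Suc)
  define a where "a = g * fps_right_inverse (fps_shift 1 f) c"
  have "a * f = fps_X * g"
    using fps_right_inverse[of "fps_shift 1 f" c] c
    by (subst f_eq) (simp add: a_def mult_ac)
  moreover have "f \<noteq> 0"
    using unit by auto
  ultimately have "\<exists>!a. a * f = fps_X * g"
    by (metis mult_right_cancel)
  then show ?thesis
    unfolding xg_div_f_def by (rule theI')
qed

theorem mainTheorem10:
  fixes g f :: "int fps"
  assumes "fps_nth g 0 = 1" and "fps_nth f 0 = 0" and "fps_nth f 1 = 1 \<or> fps_nth f 1 = -1"
    and "g * (g oo f) = 1" and "f oo f = fps_X"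
  shows "is_involution_matrix (almost_riordan_matrix (xg_div_f g f) g f)"
proof (rule is_involution_almost_riordan_matrixI[OF assms(2)])
  have unit: "is_unit (f $ 1)"
    using assms(3) by auto
  then have "f \<noteq> 0"
    by auto
  fix k
  show "almost_riordan_apply (xg_div_f g f) g f (almost_riordan_column (xg_div_f g f) g f k)
      = fps_X ^ k"
  proof (cases k)
    case 0
    then show ?thesis
      using almost_riordan_apply_self[OF assms(2) \<open>f \<noteq> 0\<close> xg_div_f_mult[OF assms(2) unit] assms(4,5)]
      by (simp add: almost_riordan_column_def)
  next
    case (Suc m)
    then show ?thesis
      using almost_riordan_apply_shifted_column[OF assms(2,4,5)]
      by (simp add: almost_riordan_column_def)
  qed
qed

end
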